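(* Let $V$ be an infinite Gödel set. A sentence of the BS class w.r.t. validity is valid in $G_V$ if and only if it is valid in $G_n$ for every $n\ge2$; and a sentence of the BS class w.r.t. 1-satisfiability is 1-satisfiable in $G_V$ if and only if it is 1-satisfiable in $G_n$ for every $n\ge2$. In particular, $\mathrm{BS}(G_{[0,1]})=\bigcap_{n\ge2}\mathrm{BS}(G_n)$.
   Context: A Gödel set is a closed set $V\subseteq[0,1]$ with $0,1\in V$. A $V$-interpretation assigns to each $k$-ary predicate a function $U^k\to V$ on a nonempty domain $U$ (constants as usual); $\bot\mapsto0$, $\wedge,\vee$ are $\min,\max$, $\mathcal I(A\supset B)=1$ if $\mathcal I(A)\le\mathcal I(B)$ and $=\mathcal I(B)$ otherwise, $\forall,\exists$ are $\inf,\sup$ over $U$. A sentence is valid in $G_V$ if every $V$-interpretation gives it value $1$, and 1-satisfiable in $G_V$ if some $V$-interpretation gives it value $1$. $G_{[0,1]}$ is $G_V$ with $V=[0,1]$; for $n\ge2$, $G_n$ is $G_V$ with $V=\{1\}\cup\{1-1/k:1\le k\le n-1\}$. The BS class w.r.t. validity consists of sentences $\forall\bar x\exists\bar y\,\psi$, and w.r.t. 1-satisfiability of sentences $\exists\bar x\forall\bar y\,\psi$, with $\psi$ quantifier-free, tuples possibly empty, and no function symbols of positive arity. $\mathrm{BS}(G)$ denotes the set of BS sentences (w.r.t. validity) valid in $G$. *)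

theory Defs
  imports Complex_Main
begin

datatype trm = Var nat | Cst nat

datatype fm =
    Bot
  | Atom nat "trm list"
  | Conj fm fm
  | Disj fm fm
  | Impl fm fm
  | All nat fm
  | Ex nat fm

fun fv_trm :: "trm \<Rightarrow> nat set" where
  "fv_trm (Var x) = {x}"
| "fv_trm (Cst k) = {}"

fun fv :: "fm \<Rightarrow> nat set" where
  "fv Bot = {}"
| "fv (Atom P ts) = (\<Union>t\<in>set ts. fv_trm t)"
| "fv (Conj A B) = fv A \<union> fv B"
| "fv (Disj A B) = fv A \<union> fv B"
| "fv (Impl A B) = fv A \<union> fv B"
| "fv (All x A) = fv A - {x}"
| "fv (Ex x A) = fv A - {x}"

definition sentence :: "fm \<Rightarrow> bool" where
  "sentence A \<longleftrightarrow> fv A = {}"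

fun qfree :: "fm \<Rightarrow> bool" where
  "qfree Bot = True"
| "qfree (Atom P ts) = True"
| "qfree (Conj A B) = (qfree A \<and> qfree B)"
| "qfree (Disj A B) = (qfree A \<and> qfree B)"
| "qfree (Impl A B) = (qfree A \<and> qfree B)"
| "qfree (All x A) = False"
| "qfree (Ex x A) = False"

definition alls :: "nat list \<Rightarrow> fm \<Rightarrow> fm" where
  "alls xs A = foldr All xs A"

definition exs :: "nat list \<Rightarrow> fm \<Rightarrow> fm" where
  "exs xs A = foldr Ex xs A"

definition BS_val :: "fm \<Rightarrow> bool" where
  "BS_val A \<longleftrightarrow> sentence A \<and> (\<exists>xs ys B. qfree B \<and> A = alls xs (exs ys B))"

definition BS_sat :: "fm \<Rightarrow> bool" where
  "BS_sat A \<longleftrightarrow> sentence A \<and> (\<exists>xs ys B. qfree B \<and> A = exs xs (alls ys B))"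

definition goedel_set :: "real set \<Rightarrow> bool" where
  "goedel_set V \<longleftrightarrow> closed V \<and> V \<subseteq> {0..1} \<and> 0 \<in> V \<and> 1 \<in> V"

definition Gn :: "nat \<Rightarrow> real set" where
  "Gn n = {1} \<union> {1 - 1 / real k | k. 1 \<le> k \<and> k \<le> n - 1}"

fun eval_trm :: "(nat \<Rightarrow> 'u) \<Rightarrow> (nat \<Rightarrow> 'u) \<Rightarrow> trm \<Rightarrow> 'u" where
  "eval_trm c e (Var x) = e x"
| "eval_trm c e (Cst k) = c k"

definition gimp :: "real \<Rightarrow> real \<Rightarrow> real" where
  "gimp a b = (if a \<le> b then 1 else b)"

fun eval :: "'u set \<Rightarrow> (nat \<Rightarrow> 'u) \<Rightarrow> (nat \<Rightarrow> 'u list \<Rightarrow> real) \<Rightarrow> (nat \<Rightarrow> 'u) \<Rightarrow> fm \<Rightarrow> real" where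
  "eval U c p e Bot = 0"
| "eval U c p e (Atom P ts) = p P (map (eval_trm c e) ts)"
| "eval U c p e (Conj A B) = min (eval U c p e A) (eval U c p e B)"
| "eval U c p e (Disj A B) = max (eval U c p e A) (eval U c p e B)"
| "eval U c p e (Impl A B) = gimp (eval U c p e A) (eval U c p e B)"
| "eval U c p e (All x A) = (INF d\<in>U. eval U c p (e(x := d)) A)"
| "eval U c p e (Ex x A) = (SUP d\<in>U. eval U c p (e(x := d)) A)"

definition interp :: "real set \<Rightarrow> 'u set \<Rightarrow> (nat \<Rightarrow> 'u) \<Rightarrow> (nat \<Rightarrow> 'u list \<Rightarrow> real) \<Rightarrow> bool" where
  "interp V U c p \<longleftrightarrow> U \<noteq> {} \<and> (\<forall>k. c k \<in> U) \<and> (\<forall>P xs. set xs \<subseteq> U \<longrightarrow> p P xs \<in> V)"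

definition valid :: "'u itself \<Rightarrow> real set \<Rightarrow> fm \<Rightarrow> bool" where
  "valid (T :: 'u itself) V A \<longleftrightarrow>
     (\<forall>(U :: 'u set) c p e. interp V U c p \<and> range e \<subseteq> U \<longrightarrow> eval U c p e A = 1)"

definition sat1 :: "'u itself \<Rightarrow> real set \<Rightarrow> fm \<Rightarrow> bool" where
  "sat1 (T :: 'u itself) V A \<longleftrightarrow>
     (\<exists>(U :: 'u set) c p e. interp V U c p \<and> range e \<subseteq> U \<and> eval U c p e A = 1)"

end

theory Submission
  imports Defs
begin

text \<open>
  Over a finite domain a formula only takes values in a finite set \<open>W\<close> containing the values
  of its atoms. A monotone map fixing \<open>0\<close> that commutes with Goedel implication on \<open>W\<close>
  commutes with min, max, implication and the (now finite) infima and suprema, hence with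
  evaluation; if it is strictly monotone on \<open>W\<close> and fixes \<open>1\<close>, it preserves exactly the
  value \<open>1\<close>. An infinite Goedel set \<open>V\<close> contains \<open>n\<close> values including \<open>0\<close> and \<open>1\<close>, so
  \<open>G\<^sub>n\<close> embeds into \<open>V\<close> and every \<open>G\<^sub>n\<close>-countermodel of any sentence becomes a
  \<open>G\<^sub>V\<close>-countermodel.

  Conversely, if \<open>\<forall>x \<exists>y \<psi>\<close> fails in a \<open>G\<^sub>V\<close>-interpretation, fix an assignment to \<open>x\<close>
  witnessing this and shrink the domain to the finitely many elements it and the constants
  name: the value of \<open>\<exists>y \<psi>\<close> can only drop, and the finite value set embeds into
  \<open>G\<^sub>N\<close> with \<open>N = |W|\<close>. Dually, shrinking the domain of a model of \<open>\<exists>x \<forall>y \<psi>\<close> can only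
  raise \<open>\<forall>y \<psi>\<close>, and on the finite model the collapse \<open>v \<mapsto> [v > 0]\<close> yields a classical
  model, which is a \<open>G\<^sub>n\<close>-model for every \<open>n\<close> and a \<open>G\<^sub>V\<close>-model.
\<close>

section \<open>Infima and suprema of finitely many values\<close>

lemma cINF_in_Icc:
  fixes g :: "'a \<Rightarrow> 'b::conditionally_complete_linorder"
  assumes "U \<noteq> {}" "g ` U \<subseteq> {a..b}"
  shows "(INF d\<in>U. g d) \<in> {a..b}"
proof -
  obtain d where d: "d \<in> U" using assms(1) by blast
  have "bdd_below (g ` U)" by (rule bdd_below_mono[OF bdd_below_Icc assms(2)])
  then have "(INF d\<in>U. g d) \<le> g d" using d by (rule cINF_lower)
  then have "(INF d\<in>U. g d) \<le> b" using d assms(2) by force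
  moreover have "a \<le> (INF d\<in>U. g d)"
    using assms(2) by (intro cINF_greatest[OF assms(1)]) auto
  ultimately show ?thesis by simp
qed

lemma cSUP_in_Icc:
  fixes g :: "'a \<Rightarrow> 'b::conditionally_complete_linorder"
  assumes "U \<noteq> {}" "g ` U \<subseteq> {a..b}"
  shows "(SUP d\<in>U. g d) \<in> {a..b}"
proof -
  obtain d where d: "d \<in> U" using assms(1) by blast
  have "bdd_above (g ` U)" by (rule bdd_above_mono[OF bdd_above_Icc assms(2)])
  then have "g d \<le> (SUP d\<in>U. g d)" using d by (rule cSUP_upper[rotated])
  then have "a \<le> (SUP d\<in>U. g d)" using d assms(2) by force
  moreover have "(SUP d\<in>U. g d) \<le> b"
    using assms(2) by (intro cSUP_least[OF assms(1)]) auto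
  ultimately show ?thesis by simp
qed

lemma cINF_finite_image_in:
  fixes g :: "'a \<Rightarrow> 'b::conditionally_complete_linorder"
  assumes "finite (g ` U)" "U \<noteq> {}"
  shows "(INF d\<in>U. g d) \<in> g ` U"
  using cInf_eq_Min[OF assms(1)] Min_in[OF assms(1)] assms(2) by simp

lemma cSUP_finite_image_in:
  fixes g :: "'a \<Rightarrow> 'b::conditionally_complete_linorder"
  assumes "finite (g ` U)" "U \<noteq> {}"
  shows "(SUP d\<in>U. g d) \<in> g ` U"
  using cSup_eq_Max[OF assms(1)] Max_in[OF assms(1)] assms(2) by simp

lemma mono_cINF_finite_image:
  fixes f :: "'b::conditionally_complete_linorder \<Rightarrow> 'c::conditionally_complete_linorder"
  assumes "mono f" "finite (g ` U)" "U \<noteq> {}"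
  shows "f (INF d\<in>U. g d) = (INF d\<in>U. f (g d))"
proof -
  have "f (Inf (g ` U)) = Inf (f ` g ` U)"
    using assms by (simp add: cInf_eq_Min mono_Min_commute)
  then show ?thesis by (simp add: image_image)
qed

lemma mono_cSUP_finite_image:
  fixes f :: "'b::conditionally_complete_linorder \<Rightarrow> 'c::conditionally_complete_linorder"
  assumes "mono f" "finite (g ` U)" "U \<noteq> {}"
  shows "f (SUP d\<in>U. g d) = (SUP d\<in>U. f (g d))"
proof -
  have "f (Sup (g ` U)) = Sup (f ` g ` U)"
    using assms by (simp add: cSup_eq_Max mono_Max_commute)
  then show ?thesis by (simp add: image_image)
qed

section \<open>Order embeddings of finite truth value sets\<close>

lemma infinite_obtain_superset_card:
  assumes "infinite V" "finite S" "S \<subseteq> V" "card S \<le> n"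
  obtains K where "S \<subseteq> K" "K \<subseteq> V" "finite K" "card K = n"
proof -
  have "infinite (V - S)" using assms(1,2) by (rule Diff_infinite_finite[rotated])
  then obtain B where B: "finite B" "card B = n - card S" "B \<subseteq> V - S"
    using infinite_arbitrarily_large by blast
  then have "card (S \<union> B) = n" using assms(2,4) by (subst card_Un_disjoint) auto
  then show thesis using that[of "S \<union> B"] B assms(2,3) by auto
qed

definition pos_rank :: "real set \<Rightarrow> real \<Rightarrow> nat" where
  "pos_rank W v = card {w\<in>W. 0 < w \<and> w \<le> v}"

lemma
  assumes "finite W" "W \<subseteq> {0..1}" "0 \<in> W"
  shows mono_pos_rank: "mono (pos_rank W)"
    and pos_rank_less_card: "pos_rank W v < card W"
    and pos_rank_0: "pos_rank W 0 = 0"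
    and pos_rank_1: "pos_rank W 1 = card W - 1"
    and strict_mono_on_pos_rank: "strict_mono_on W (pos_rank W)"
proof -
  show "mono (pos_rank W)"
    unfolding pos_rank_def by (rule monoI, rule card_mono) (use assms(1) in auto)
  have "{w\<in>W. 0 < w \<and> w \<le> 1} = W - {0}" using assms(2) by force
  then show "pos_rank W 1 = card W - 1" unfolding pos_rank_def using assms by simp
  have "pos_rank W v \<le> card (W - {0})"
    unfolding pos_rank_def using assms(1) by (intro card_mono) auto
  moreover have "0 < card W" using assms(1,3) card_gt_0_iff by blast
  ultimately show "pos_rank W v < card W" using assms by simp
  show "pos_rank W 0 = 0" unfolding pos_rank_def by (auto simp: card_eq_0_iff)
  show "strict_mono_on W (pos_rank W)"
  proof (rule strict_mono_onI)
    fix a b assume ab: "a \<in> W" "b \<in> W" "a < b"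
    have "0 \<le> a" using ab(1) assms(2) by auto
    then have "b \<in> {w\<in>W. 0 < w \<and> w \<le> b}" "b \<notin> {w\<in>W. 0 < w \<and> w \<le> a}" using ab by auto
    moreover have "{w\<in>W. 0 < w \<and> w \<le> a} \<subseteq> {w\<in>W. 0 < w \<and> w \<le> b}" using ab(3) by auto
    ultimately have "{w\<in>W. 0 < w \<and> w \<le> a} \<subset> {w\<in>W. 0 < w \<and> w \<le> b}" by blast
    then show "pos_rank W a < pos_rank W b"
      unfolding pos_rank_def using assms(1) by (intro psubset_card_mono) auto
  qed
qed

lemma order_embedding:
  fixes W K :: "real set"
  assumes W: "finite W" "W \<subseteq> {0..1}" "0 \<in> W"
    and K: "finite K" "K \<subseteq> {0..1}" "0 \<in> K" "1 \<in> K" "card K = card W"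
  obtains f where "mono f" "strict_mono_on W f" "f 0 = 0" "f 1 = 1" "range f \<subseteq> K"
proof
  define ks where "ks = sorted_list_of_set K"
  define f where "f v = ks ! pos_rank W v" for v
  have len: "length ks = card W" and set_ks: "set ks = K"
    unfolding ks_def using K by auto
  have idx_less: "pos_rank W v < length ks" for v using pos_rank_less_card[OF W] len by simp
  have nth_le: "ks ! i \<le> ks ! j" if "i \<le> j" "j < length ks" for i j
    using sorted_nth_mono[of ks] that unfolding ks_def by simp
  have nth_bounds: "0 \<le> ks ! i" "ks ! i \<le> 1" if "i < length ks" for i
    using nth_mem[OF that] set_ks K(2) by auto
  show "mono f"
    unfolding f_def using nth_le idx_less monoD[OF mono_pos_rank[OF W]] by (intro monoI) blast
  show "range f \<subseteq> K" unfolding f_def using idx_less set_ks nth_mem by blast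
  show "f 0 = 0"
  proof -
    obtain j where "j < length ks" "ks ! j = 0" using K(3) set_ks by (metis in_set_conv_nth)
    then show ?thesis unfolding f_def pos_rank_0[OF W] using nth_le[of 0 j] nth_bounds[of 0] by force
  qed
  show "f 1 = 1"
  proof -
    obtain j where "j < length ks" "ks ! j = 1" using K(4) set_ks by (metis in_set_conv_nth)
    then show ?thesis
      unfolding f_def pos_rank_1[OF W] len[symmetric]
      using nth_le[of j "length ks - 1"] nth_bounds[of "length ks - 1"] by force
  qed
  show "strict_mono_on W f"
    unfolding f_def ks_def
    using strict_mono_onD[OF strict_mono_on_pos_rank[OF W]] sorted_wrt_nth_less[OF strict_sorted_list_of_set[of K]]
      idx_less[unfolded ks_def] by (intro strict_mono_onI) auto
qed

lemma Gn_eq: "Gn n = insert 1 ((\<lambda>k. 1 - 1 / real k) ` {1..n - 1})"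
  unfolding Gn_def by auto

lemma finite_Gn: "finite (Gn n)"
  unfolding Gn_eq by simp

lemma Gn_subset_unit_interval: "Gn n \<subseteq> {0..1}"
  unfolding Gn_eq by (auto simp: field_simps)

lemma zero_one_in_Gn: "2 \<le> n \<Longrightarrow> {0, 1} \<subseteq> Gn n"
  unfolding Gn_eq by (auto intro!: image_eqI[of 0 _ 1])

lemma card_Gn: "1 \<le> n \<Longrightarrow> card (Gn n) = n"
proof -
  assume "1 \<le> n"
  have "inj_on (\<lambda>k. 1 - 1 / real k) {1..n - 1}"
    by (auto simp: inj_on_def field_simps)
  then have "card ((\<lambda>k. 1 - 1 / real k) ` {1..n - 1}) = n - 1" by (simp add: card_image)
  moreover have "1 \<notin> (\<lambda>k. 1 - 1 / real k) ` {1..n - 1}" by auto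
  then have "card (Gn n) = Suc (card ((\<lambda>k. 1 - 1 / real k) ` {1..n - 1}))"
    unfolding Gn_eq by (rule card_insert_disjoint[rotated]) simp
  ultimately show ?thesis using \<open>1 \<le> n\<close> by linarith
qed

lemma Gn_2: "Gn 2 = {0, 1}"
  unfolding Gn_eq by (simp add: insert_commute)

fun csts_trm :: "trm \<Rightarrow> nat set" where
  "csts_trm (Var x) = {}"
| "csts_trm (Cst k) = {k}"

fun csts :: "fm \<Rightarrow> nat set" where
  "csts Bot = {}"
| "csts (Atom P ts) = (\<Union>t\<in>set ts. csts_trm t)"
| "csts (Conj A B) = csts A \<union> csts B"
| "csts (Disj A B) = csts A \<union> csts B"
| "csts (Impl A B) = csts A \<union> csts B"
| "csts (All x A) = csts A"
| "csts (Ex x A) = csts A"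

fun atom_values :: "fm \<Rightarrow> 'u set \<Rightarrow> (nat \<Rightarrow> 'u list \<Rightarrow> real) \<Rightarrow> real set" where
  "atom_values Bot U p = {}"
| "atom_values (Atom P ts) U p = p P ` {xs. set xs \<subseteq> U \<and> length xs = length ts}"
| "atom_values (Conj A B) U p = atom_values A U p \<union> atom_values B U p"
| "atom_values (Disj A B) U p = atom_values A U p \<union> atom_values B U p"
| "atom_values (Impl A B) U p = atom_values A U p \<union> atom_values B U p"
| "atom_values (All x A) U p = atom_values A U p"
| "atom_values (Ex x A) U p = atom_values A U p"

lemma finite_fv: "finite (fv A)"
proof -
  have "finite (fv_trm t)" for t by (cases t) auto
  then show ?thesis by (induction A) auto
qed

lemma finite_csts: "finite (csts A)"
proof -
  have "finite (csts_trm t)" for t by (cases t) auto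
  then show ?thesis by (induction A) auto
qed

lemma finite_atom_values: "finite U \<Longrightarrow> finite (atom_values D U p)"
  by (induction D) (auto simp: finite_lists_length_eq)

lemma atom_values_subset: "interp V U c p \<Longrightarrow> atom_values D U p \<subseteq> V"
  unfolding interp_def by (induction D) auto

lemma interp_comp:
  "interp V U c p \<Longrightarrow> f ` V \<subseteq> K \<Longrightarrow> interp K U c (\<lambda>P xs. f (p P xs))"
  unfolding interp_def by blast

lemma eval_trm_in: "\<forall>k. c k \<in> U \<Longrightarrow> range e \<subseteq> U \<Longrightarrow> eval_trm c e t \<in> U"
  by (cases t) auto

lemma eval_cong:
  "(\<forall>k\<in>csts D. c k = c' k) \<Longrightarrow> (\<forall>x\<in>fv D. e x = e' x)
    \<Longrightarrow> eval U c p e D = eval U c' p e' D"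
proof (induction D arbitrary: e e')
  case (Atom P ts)
  have "eval_trm c e t = eval_trm c' e' t" if "t \<in> set ts" for t
    using Atom that by (cases t) auto
  then show ?case by (simp cong: map_cong)
next
  case (All x D)
  then show ?case by (auto intro!: INF_cong)
next
  case (Ex x D)
  then show ?case by (auto intro!: SUP_cong)
next
  case (Conj A B)
  show ?case using Conj.prems Conj.IH[of e e'] by simp
next
  case (Disj A B)
  show ?case using Disj.prems Disj.IH[of e e'] by simp
next
  case (Impl A B)
  show ?case using Impl.prems Impl.IH[of e e'] by simp
qed simp

lemma eval_qfree_domain: "qfree B \<Longrightarrow> eval U c p e B = eval U' c p e B"
  by (induction B) auto

lemma eval_in_unit_interval:
  assumes "interp V U c p" "V \<subseteq> {0..1}"
  shows "range e \<subseteq> U \<Longrightarrow> eval U c p e D \<in> {0..1}"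
proof (induction D arbitrary: e)
  case (Atom P ts)
  have "set (map (eval_trm c e) ts) \<subseteq> U"
    using Atom.prems assms(1) eval_trm_in[of c U e] unfolding interp_def by auto
  then have "p P (map (eval_trm c e) ts) \<in> V"
    using assms(1) unfolding interp_def by blast
  then show ?case using assms(2) by auto
next
  case (All x D)
  have "eval U c p (e(x := d)) D \<in> {0..1}" if "d \<in> U" for d
    using All.prems that by (intro All.IH) auto
  then have "(\<lambda>d. eval U c p (e(x := d)) D) ` U \<subseteq> {0..1}" by auto
  moreover have "U \<noteq> {}" using assms(1) by (simp add: interp_def)
  ultimately show ?case by (simp add: cINF_in_Icc del: atLeastAtMost_iff)
next
  case (Ex x D)
  have "eval U c p (e(x := d)) D \<in> {0..1}" if "d \<in> U" for d
    using Ex.prems that by (intro Ex.IH) auto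
  then have "(\<lambda>d. eval U c p (e(x := d)) D) ` U \<subseteq> {0..1}" by auto
  moreover have "U \<noteq> {}" using assms(1) by (simp add: interp_def)
  ultimately show ?case by (simp add: cSUP_in_Icc del: atLeastAtMost_iff)
qed (auto simp: gimp_def min_def max_def)

lemma bdd_eval_image:
  assumes "interp V U c p" "V \<subseteq> {0..1}" "range e \<subseteq> U"
  shows "bdd_below ((\<lambda>d. eval U c p (e(x := d)) D) ` U)"
    and "bdd_above ((\<lambda>d. eval U c p (e(x := d)) D) ` U)"
proof -
  have "(\<lambda>d. eval U c p (e(x := d)) D) ` U \<subseteq> {0..1}"
    using eval_in_unit_interval[OF assms(1,2)] assms(3) by (auto simp: image_subset_iff)
  then show "bdd_below ((\<lambda>d. eval U c p (e(x := d)) D) ` U)"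
    and "bdd_above ((\<lambda>d. eval U c p (e(x := d)) D) ` U)"
    by (metis bdd_below_Icc bdd_below_mono, metis bdd_above_Icc bdd_above_mono)
qed

section \<open>Quantifier prefixes and finite subdomains\<close>

lemma eval_alls_le:
  assumes "interp V U c p" "V \<subseteq> {0..1}" "range e \<subseteq> U"
  shows "eval U c p e (alls xs C) \<le> eval U c p e C"
proof (induction xs)
  case (Cons x xs)
  have "eval U c p e (alls (x # xs) C) \<le> eval U c p (e(x := e x)) (alls xs C)"
    using cINF_lower[OF bdd_eval_image(1)[OF assms, of x "alls xs C"], of "e x"] assms(3)
    by (auto simp: alls_def)
  then show ?case using Cons.IH by simp
qed (simp add: alls_def)

lemma eval_exs_ge:
  assumes "interp V U c p" "V \<subseteq> {0..1}" "range e \<subseteq> U"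
  shows "eval U c p e C \<le> eval U c p e (exs xs C)"
proof (induction xs)
  case (Cons x xs)
  have "eval U c p (e(x := e x)) (exs xs C) \<le> eval U c p e (exs (x # xs) C)"
    using cSUP_upper[OF _ bdd_eval_image(2)[OF assms, of x "exs xs C"], of "e x"] assms(3)
    by (auto simp: exs_def)
  then show ?case using Cons.IH by simp
qed (simp add: exs_def)

lemma eval_alls_less_witness:
  assumes "interp V U c p" "V \<subseteq> {0..1}"
  shows "range e \<subseteq> U \<Longrightarrow> eval U c p e (alls xs C) < t
    \<Longrightarrow> \<exists>e'. range e' \<subseteq> U \<and> eval U c p e' C < t"
proof (induction xs arbitrary: e)
  case (Cons x xs)
  have "U \<noteq> {}" using assms(1) by (simp add: interp_def)
  then obtain d where "d \<in> U" "eval U c p (e(x := d)) (alls xs C) < t"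
    using Cons.prems cINF_less_iff[OF _ bdd_eval_image(1)[OF assms Cons.prems(1)]]
    by (auto simp: alls_def)
  then show ?case using Cons.prems(1) by (intro Cons.IH) auto
qed (auto simp: alls_def)

lemma less_eval_exs_witness:
  assumes "interp V U c p" "V \<subseteq> {0..1}"
  shows "range e \<subseteq> U \<Longrightarrow> t < eval U c p e (exs xs C)
    \<Longrightarrow> \<exists>e'. range e' \<subseteq> U \<and> t < eval U c p e' C"
proof (induction xs arbitrary: e)
  case (Cons x xs)
  have "U \<noteq> {}" using assms(1) by (simp add: interp_def)
  then obtain d where "d \<in> U" "t < eval U c p (e(x := d)) (exs xs C)"
    using Cons.prems less_cSUP_iff[OF _ bdd_eval_image(2)[OF assms Cons.prems(1)]]
    by (auto simp: exs_def)
  then show ?case using Cons.prems(1) by (intro Cons.IH) auto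
qed (auto simp: exs_def)

lemma eval_exs_subdomain_le:
  assumes "interp V U c p" "V \<subseteq> {0..1}" "U' \<subseteq> U" "U' \<noteq> {}" "qfree B"
  shows "range e \<subseteq> U' \<Longrightarrow> eval U' c p e (exs ys B) \<le> eval U c p e (exs ys B)"
proof (induction ys arbitrary: e)
  case Nil
  then show ?case using eval_qfree_domain[OF assms(5), of U' c p e U] by (simp add: exs_def)
next
  case (Cons y ys)
  have "range e \<subseteq> U" using Cons.prems assms(3) by auto
  have "(SUP d\<in>U'. eval U' c p (e(y := d)) (exs ys B))
      \<le> (SUP d\<in>U. eval U c p (e(y := d)) (exs ys B))"
  proof (rule cSUP_mono[OF assms(4) bdd_eval_image(2)[OF assms(1,2) \<open>range e \<subseteq> U\<close>]])
    fix d assume "d \<in> U'"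
    then have "eval U' c p (e(y := d)) (exs ys B) \<le> eval U c p (e(y := d)) (exs ys B)"
      using Cons.prems by (intro Cons.IH) auto
    then show "\<exists>d'\<in>U. eval U' c p (e(y := d)) (exs ys B) \<le> eval U c p (e(y := d')) (exs ys B)"
      using \<open>d \<in> U'\<close> assms(3) by blast
  qed
  then show ?case by (simp add: exs_def)
qed

lemma eval_alls_subdomain_ge:
  assumes "interp V U c p" "V \<subseteq> {0..1}" "U' \<subseteq> U" "U' \<noteq> {}" "qfree B"
  shows "range e \<subseteq> U' \<Longrightarrow> eval U c p e (alls ys B) \<le> eval U' c p e (alls ys B)"
proof (induction ys arbitrary: e)
  case Nil
  then show ?case using eval_qfree_domain[OF assms(5), of U' c p e U] by (simp add: alls_def)
next
  case (Cons y ys)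
  have "range e \<subseteq> U" using Cons.prems assms(3) by auto
  have "(INF d\<in>U. eval U c p (e(y := d)) (alls ys B))
      \<le> (INF d\<in>U'. eval U' c p (e(y := d)) (alls ys B))"
  proof (rule cINF_mono[OF assms(4) bdd_eval_image(1)[OF assms(1,2) \<open>range e \<subseteq> U\<close>]])
    fix d assume "d \<in> U'"
    then have "eval U c p (e(y := d)) (alls ys B) \<le> eval U' c p (e(y := d)) (alls ys B)"
      using Cons.prems by (intro Cons.IH) auto
    then show "\<exists>d'\<in>U. eval U c p (e(y := d')) (alls ys B) \<le> eval U' c p (e(y := d)) (alls ys B)"
      using \<open>d \<in> U'\<close> assms(3) by blast
  qed
  then show ?case by (simp add: alls_def)
qed

lemma finite_subinterp:
  assumes "interp V U c p" "range e \<subseteq> U"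
  obtains U' c' e' where "finite U'" "U' \<subseteq> U" "U' \<noteq> {}" "\<forall>k. c' k \<in> U'" "range e' \<subseteq> U'"
    "eval U c' p e' C = eval U c p e C"
proof
  define U' where "U' = insert (e 0) (e ` fv C \<union> c ` csts C)"
  define c' where "c' = (\<lambda>k. if k \<in> csts C then c k else e 0)"
  define e' where "e' = (\<lambda>x. if x \<in> fv C then e x else e 0)"
  show "finite U'" unfolding U'_def using finite_fv finite_csts by auto
  show "U' \<subseteq> U" unfolding U'_def using assms unfolding interp_def by auto
  show "U' \<noteq> {}" "\<forall>k. c' k \<in> U'" "range e' \<subseteq> U'" unfolding U'_def c'_def e'_def by auto
  show "eval U c' p e' C = eval U c p e C" by (rule eval_cong) (auto simp: c'_def e'_def)
qed

lemma finite_subinterp_exs: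
  assumes "interp V U c p" "V \<subseteq> {0..1}" "range e \<subseteq> U" "qfree B"
  obtains U' c' e' where "finite U'" "interp V U' c' p" "range e' \<subseteq> U'"
    "eval U' c' p e' (exs ys B) \<le> eval U c p e (exs ys B)"
proof -
  obtain U' c' e' where U': "finite U'" "U' \<subseteq> U" "U' \<noteq> {}" "\<forall>k. c' k \<in> U'" "range e' \<subseteq> U'"
    "eval U c' p e' (exs ys B) = eval U c p e (exs ys B)"
    using finite_subinterp[OF assms(1,3)] by blast
  have "interp V U c' p" "interp V U' c' p" using assms(1) U'(2-4) unfolding interp_def by blast+
  moreover from this(1) have "eval U' c' p e' (exs ys B) \<le> eval U c' p e' (exs ys B)"
    by (rule eval_exs_subdomain_le[OF _ assms(2) U'(2,3) assms(4) U'(5)])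
  ultimately show thesis using that[OF U'(1) _ U'(5)] U'(6) by simp
qed

lemma finite_subinterp_alls:
  assumes "interp V U c p" "V \<subseteq> {0..1}" "range e \<subseteq> U" "qfree B"
  obtains U' c' e' where "finite U'" "interp V U' c' p" "range e' \<subseteq> U'"
    "eval U c p e (alls ys B) \<le> eval U' c' p e' (alls ys B)"
proof -
  obtain U' c' e' where U': "finite U'" "U' \<subseteq> U" "U' \<noteq> {}" "\<forall>k. c' k \<in> U'" "range e' \<subseteq> U'"
    "eval U c' p e' (alls ys B) = eval U c p e (alls ys B)"
    using finite_subinterp[OF assms(1,3)] by blast
  have "interp V U c' p" "interp V U' c' p" using assms(1) U'(2-4) unfolding interp_def by blast+
  moreover from this(1) have "eval U c' p e' (alls ys B) \<le> eval U' c' p e' (alls ys B)"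
    by (rule eval_alls_subdomain_ge[OF _ assms(2) U'(2,3) assms(4) U'(5)])
  ultimately show thesis using that[OF U'(1) _ U'(5)] U'(6) by simp
qed

section \<open>Transferring interpretations along maps of truth values\<close>

lemma eval_in_finite_values:
  assumes "finite W" "0 \<in> W" "1 \<in> W" "U \<noteq> {}" "\<forall>k. c k \<in> U"
  shows "atom_values D U p \<subseteq> W \<Longrightarrow> range e \<subseteq> U \<Longrightarrow> eval U c p e D \<in> W"
proof (induction D arbitrary: e)
  case (Atom P ts)
  have "map (eval_trm c e) ts \<in> {xs. set xs \<subseteq> U \<and> length xs = length ts}"
    using eval_trm_in[OF assms(5) Atom.prems(2)] by auto
  then show ?case using Atom.prems(1) by auto
next
  case (All x D)
  have "eval U c p (e(x := d)) D \<in> W" if "d \<in> U" for d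
    using All.prems that by (intro All.IH) auto
  then have img: "(\<lambda>d. eval U c p (e(x := d)) D) ` U \<subseteq> W" by auto
  show ?case
    using cINF_finite_image_in[OF finite_subset[OF img assms(1)] assms(4)] img by auto
next
  case (Ex x D)
  have "eval U c p (e(x := d)) D \<in> W" if "d \<in> U" for d
    using Ex.prems that by (intro Ex.IH) auto
  then have img: "(\<lambda>d. eval U c p (e(x := d)) D) ` U \<subseteq> W" by auto
  show ?case
    using cSUP_finite_image_in[OF finite_subset[OF img assms(1)] assms(4)] img by auto
qed (auto simp: assms min_def max_def gimp_def)

lemma eval_map_values:
  assumes W: "finite W" "0 \<in> W" "1 \<in> W" and U: "U \<noteq> {}" "\<forall>k. c k \<in> U"
    and f: "mono f" "f 0 = 0" "\<forall>a\<in>W. \<forall>b\<in>W. f (gimp a b) = gimp (f a) (f b)"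
  shows "atom_values D U p \<subseteq> W \<Longrightarrow> range e \<subseteq> U
    \<Longrightarrow> eval U c (\<lambda>P xs. f (p P xs)) e D = f (eval U c p e D)"
proof (induction D arbitrary: e)
  case (Impl A B)
  then have "eval U c p e A \<in> W" "eval U c p e B \<in> W"
    using eval_in_finite_values[OF W U] by auto
  then show ?case using Impl f(3) by auto
next
  case (All x D)
  have "eval U c p (e(x := d)) D \<in> W" if "d \<in> U" for d
    using All.prems that by (intro eval_in_finite_values[OF W U]) auto
  then have "(\<lambda>d. eval U c p (e(x := d)) D) ` U \<subseteq> W" by auto
  then have "finite ((\<lambda>d. eval U c p (e(x := d)) D) ` U)" using W(1) finite_subset by blast
  moreover have "eval U c (\<lambda>P xs. f (p P xs)) (e(x := d)) D = f (eval U c p (e(x := d)) D)"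
    if "d \<in> U" for d
    using All.prems that by (intro All.IH) auto
  ultimately show ?case
    using mono_cINF_finite_image[OF f(1) _ U(1)] by (simp cong: INF_cong)
next
  case (Ex x D)
  have "eval U c p (e(x := d)) D \<in> W" if "d \<in> U" for d
    using Ex.prems that by (intro eval_in_finite_values[OF W U]) auto
  then have "(\<lambda>d. eval U c p (e(x := d)) D) ` U \<subseteq> W" by auto
  then have "finite ((\<lambda>d. eval U c p (e(x := d)) D) ` U)" using W(1) finite_subset by blast
  moreover have "eval U c (\<lambda>P xs. f (p P xs)) (e(x := d)) D = f (eval U c p (e(x := d)) D)"
    if "d \<in> U" for d
    using Ex.prems that by (intro Ex.IH) auto
  ultimately show ?case
    using mono_cSUP_finite_image[OF f(1) _ U(1)] by (simp cong: SUP_cong)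
qed (auto simp: f(2) min_of_mono[OF f(1)] max_of_mono[OF f(1)])

lemma gimp_strict_mono_on:
  assumes "mono f" "strict_mono_on W f" "f 1 = 1" "a \<in> W" "b \<in> W"
  shows "f (gimp a b) = gimp (f a) (f b)"
proof (cases "a \<le> b")
  case True
  then show ?thesis using monoD[OF assms(1) True] assms(3) by (simp add: gimp_def)
next
  case False
  then have "f b < f a" using strict_mono_onD[OF assms(2)] assms(4,5) by simp
  then show ?thesis using False by (simp add: gimp_def)
qed

lemma eval_order_embedding_eq_1:
  assumes W: "finite W" "W \<subseteq> {0..1}" "0 \<in> W" "1 \<in> W"
    and U: "U \<noteq> {}" "\<forall>k. c k \<in> U" "atom_values D U p \<subseteq> W" "range e \<subseteq> U"
    and f: "mono f" "strict_mono_on W f" "f 0 = 0" "f 1 = 1"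
  shows "eval U c (\<lambda>P xs. f (p P xs)) e D = 1 \<longleftrightarrow> eval U c p e D = 1"
proof -
  have v: "eval U c p e D \<in> W" by (rule eval_in_finite_values[OF W(1,3,4) U])
  have "\<forall>a\<in>W. \<forall>b\<in>W. f (gimp a b) = gimp (f a) (f b)"
    using gimp_strict_mono_on[OF f(1,2,4)] by blast
  then have "eval U c (\<lambda>P xs. f (p P xs)) e D = f (eval U c p e D)"
    by (rule eval_map_values[OF W(1,3,4) U(1,2) f(1,3) _ U(3,4)])
  moreover have "f v = 1 \<longleftrightarrow> v = 1" if "v \<in> W" for v
  proof
    assume "f v = 1"
    show "v = 1"
    proof (rule ccontr)
      assume "v \<noteq> 1"
      then have "v < 1" using that W(2) by fastforce
      then have "f v < f 1" by (rule strict_mono_onD[OF f(2) that W(4)])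
      then show False using \<open>f v = 1\<close> f(4) by simp
    qed
  qed (use f(4) in simp)
  ultimately show ?thesis using v by simp
qed

lemma obtain_finite_value_set:
  assumes "finite U" "interp V U c p" "V \<subseteq> {0..1}"
  obtains W where "finite W" "W \<subseteq> {0..1}" "0 \<in> W" "1 \<in> W" "atom_values D U p \<subseteq> W"
proof
  let ?W = "insert 0 (insert 1 (atom_values D U p))"
  show "finite ?W" using finite_atom_values[OF assms(1)] by simp
  show "?W \<subseteq> {0..1}" using atom_values_subset[OF assms(2)] assms(3) by auto
qed auto

lemma finite_interp_into_Gn:
  assumes "finite U" "interp V U c p" "V \<subseteq> {0..1}" "range e \<subseteq> U"
  obtains N f where "2 \<le> N" "interp (Gn N) U c (\<lambda>P xs. f (p P xs))"
    "eval U c (\<lambda>P xs. f (p P xs)) e D = 1 \<longleftrightarrow> eval U c p e D = 1"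
proof -
  obtain W where W: "finite W" "W \<subseteq> {0..1}" "0 \<in> W" "1 \<in> W" "atom_values D U p \<subseteq> W"
    using obtain_finite_value_set[OF assms(1-3)] by blast
  have "card {0, 1 :: real} \<le> card W" using W by (intro card_mono) auto
  then have N: "2 \<le> card W" by simp
  have "0 \<in> Gn (card W)" "1 \<in> Gn (card W)" using zero_one_in_Gn[OF N] by auto
  moreover have "card (Gn (card W)) = card W" using card_Gn N by simp
  ultimately obtain f where f: "mono f" "strict_mono_on W f" "f 0 = 0" "f 1 = 1" "range f \<subseteq> Gn (card W)"
    using order_embedding[OF W(1-3) finite_Gn Gn_subset_unit_interval] by blast
  have I: "interp (Gn (card W)) U c (\<lambda>P xs. f (p P xs))" using interp_comp[OF assms(2)] f(5) by blast
  have U: "U \<noteq> {}" "\<forall>k. c k \<in> U" using assms(2) unfolding interp_def by auto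
  show thesis by (rule that[OF N I eval_order_embedding_eq_1[OF W(1-4) U W(5) assms(4) f(1-4)]])
qed

definition crisp :: "real \<Rightarrow> real" where
  "crisp v = (if 0 < v then 1 else 0)"

lemma mono_crisp: "mono crisp"
  unfolding crisp_def mono_def by auto

lemma range_crisp: "range crisp \<subseteq> {0, 1}"
  unfolding crisp_def by auto

lemma crisp_gimp: "0 \<le> a \<Longrightarrow> 0 \<le> b \<Longrightarrow> crisp (gimp a b) = gimp (crisp a) (crisp b)"
  unfolding crisp_def gimp_def by auto

section \<open>The Bernays-Schoenfinkel fragment\<close>

lemma valid_Gn_if_valid:
  assumes "goedel_set V" "infinite V" "2 \<le> n" "valid TYPE('u) V A"
  shows "valid TYPE('u) (Gn n) A"
  unfolding valid_def
proof (intro allI impI, elim conjE)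
  fix U :: "'u set" and c :: "nat \<Rightarrow> 'u" and p and e :: "nat \<Rightarrow> 'u"
  assume I: "interp (Gn n) U c p" and e: "range e \<subseteq> U"
  have V: "V \<subseteq> {0..1}" "{0, 1} \<subseteq> V" using assms(1) unfolding goedel_set_def by auto
  have "finite {0, 1 :: real}" "card {0, 1 :: real} \<le> n" using assms(3) by auto
  then obtain K where K: "{0, 1} \<subseteq> K" "K \<subseteq> V" "finite K" "card K = n"
    using infinite_obtain_superset_card[OF assms(2) _ V(2)] by blast
  have Gn: "0 \<in> Gn n" "1 \<in> Gn n" using zero_one_in_Gn[OF assms(3)] by auto
  have "card K = card (Gn n)" using K(4) card_Gn assms(3) by simp
  moreover have "K \<subseteq> {0..1}" "0 \<in> K" "1 \<in> K" using K(1,2) V(1) by auto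
  ultimately obtain f where f: "mono f" "strict_mono_on (Gn n) f" "f 0 = 0" "f 1 = 1" "range f \<subseteq> K"
    using order_embedding[OF finite_Gn Gn_subset_unit_interval Gn(1) K(3)] by blast
  have "interp V U c (\<lambda>P xs. f (p P xs))" using interp_comp[OF I] f(5) K(2) by blast
  then have "eval U c (\<lambda>P xs. f (p P xs)) e A = 1" using assms(4) e unfolding valid_def by blast
  moreover have "U \<noteq> {}" "\<forall>k. c k \<in> U" using I unfolding interp_def by auto
  ultimately show "eval U c p e A = 1"
    using eval_order_embedding_eq_1[OF finite_Gn Gn_subset_unit_interval Gn _ _
        atom_values_subset[OF I] e f(1-4)] by blast
qed

lemma valid_if_valid_Gn:
  assumes V: "V \<subseteq> {0..1}" and "qfree B"
    and valid_Gn: "\<forall>n\<ge>2. valid TYPE('u) (Gn n) (alls xs (exs ys B))"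
  shows "valid TYPE('u) V (alls xs (exs ys B))"
  unfolding valid_def
proof (intro allI impI, elim conjE)
  fix U :: "'u set" and c :: "nat \<Rightarrow> 'u" and p and e :: "nat \<Rightarrow> 'u"
  assume I: "interp V U c p" and e: "range e \<subseteq> U"
  show "eval U c p e (alls xs (exs ys B)) = 1"
  proof (rule ccontr)
    assume "eval U c p e (alls xs (exs ys B)) \<noteq> 1"
    then have "eval U c p e (alls xs (exs ys B)) < 1"
      using eval_in_unit_interval[OF I V e, of "alls xs (exs ys B)"] by auto
    then obtain e1 where "range e1 \<subseteq> U" "eval U c p e1 (exs ys B) < 1"
      using eval_alls_less_witness[OF I V e] by blast
    then obtain U' c' e' where U': "finite U'" "interp V U' c' p" "range e' \<subseteq> U'"
      "eval U' c' p e' (exs ys B) < 1"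
      using finite_subinterp_exs[OF I V _ \<open>qfree B\<close>] by (metis le_less_trans)
    obtain N f where N: "2 \<le> N" and I': "interp (Gn N) U' c' (\<lambda>P xs. f (p P xs))"
      and "eval U' c' (\<lambda>P xs. f (p P xs)) e' (exs ys B) = 1 \<longleftrightarrow> eval U' c' p e' (exs ys B) = 1"
      by (rule finite_interp_into_Gn[OF U'(1,2) V U'(3)])
    then have "eval U' c' (\<lambda>P xs. f (p P xs)) e' (exs ys B) \<noteq> 1" using U'(4) by simp
    moreover have "eval U' c' (\<lambda>P xs. f (p P xs)) e' (alls xs (exs ys B)) = 1"
      using valid_Gn N I' U'(3) unfolding valid_def by blast
    then have "1 \<le> eval U' c' (\<lambda>P xs. f (p P xs)) e' (exs ys B)"
      using eval_alls_le[OF I' Gn_subset_unit_interval U'(3)] by metis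
    ultimately show False
      using eval_in_unit_interval[OF I' Gn_subset_unit_interval U'(3), of "exs ys B"] by auto
  qed
qed

lemma sat1_crisp_if_sat1:
  assumes V: "V \<subseteq> {0..1}" and "qfree B" and "sat1 TYPE('u) V (exs xs (alls ys B))"
  shows "sat1 TYPE('u) {0, 1} (exs xs (alls ys B))"
proof -
  obtain U :: "'u set" and c p e where I: "interp V U c p" and e: "range e \<subseteq> U"
    and sat: "eval U c p e (exs xs (alls ys B)) = 1"
    using assms(3) unfolding sat1_def by blast
  obtain e1 where "range e1 \<subseteq> U" "0 < eval U c p e1 (alls ys B)"
    using less_eval_exs_witness[OF I V e, of 0 xs "alls ys B"] sat by auto
  then obtain U' c' e' where U': "finite U'" "interp V U' c' p" "range e' \<subseteq> U'"
    "0 < eval U' c' p e' (alls ys B)"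
    using finite_subinterp_alls[OF I V _ \<open>qfree B\<close>] by (metis less_le_trans)
  obtain W where W: "finite W" "W \<subseteq> {0..1}" "0 \<in> W" "1 \<in> W" "atom_values (alls ys B) U' p \<subseteq> W"
    using obtain_finite_value_set[OF U'(1,2) V] by blast
  have I': "interp {0, 1} U' c' (\<lambda>P xs. crisp (p P xs))"
    using interp_comp[OF U'(2)] range_crisp by blast
  have "crisp (gimp a b) = gimp (crisp a) (crisp b)" if "a \<in> W" "b \<in> W" for a b
    using that W(2) by (intro crisp_gimp) auto
  moreover have "U' \<noteq> {}" "\<forall>k. c' k \<in> U'" using U'(2) unfolding interp_def by auto
  moreover have "crisp 0 = 0" by (simp add: crisp_def)
  ultimately have "eval U' c' (\<lambda>P xs. crisp (p P xs)) e' (alls ys B)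
      = crisp (eval U' c' p e' (alls ys B))"
    using eval_map_values[OF W(1,3,4) _ _ mono_crisp _ _ W(5) U'(3)] by blast
  then have "eval U' c' (\<lambda>P xs. crisp (p P xs)) e' (alls ys B) = 1"
    using U'(4) by (simp add: crisp_def)
  moreover have "eval U' c' (\<lambda>P xs. crisp (p P xs)) e' (alls ys B)
      \<le> eval U' c' (\<lambda>P xs. crisp (p P xs)) e' (exs xs (alls ys B))"
    by (rule eval_exs_ge[OF I' _ U'(3)]) simp
  moreover have "eval U' c' (\<lambda>P xs. crisp (p P xs)) e' (exs xs (alls ys B)) \<le> 1"
    using eval_in_unit_interval[OF I' _ U'(3)] by simp
  ultimately have "eval U' c' (\<lambda>P xs. crisp (p P xs)) e' (exs xs (alls ys B)) = 1" by simp
  then show ?thesis using I' U'(3) unfolding sat1_def by blast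
qed

lemma sat1_mono:
  assumes "V \<subseteq> V'" "sat1 TYPE('u) V A"
  shows "sat1 TYPE('u) V' A"
proof -
  obtain U :: "'u set" and c p e where "interp V U c p" "range e \<subseteq> U" "eval U c p e A = 1"
    using assms(2) unfolding sat1_def by blast
  moreover from this(1) have "interp V' U c p" using assms(1) unfolding interp_def by blast
  ultimately show ?thesis unfolding sat1_def by blast
qed

lemma BS_val_valid_iff:
  assumes "goedel_set V" "infinite V" "BS_val A"
  shows "valid TYPE('u) V A \<longleftrightarrow> (\<forall>n\<ge>2. valid TYPE('u) (Gn n) A)"
proof -
  obtain xs ys B where "qfree B" "A = alls xs (exs ys B)" using assms(3) unfolding BS_val_def by blast
  moreover have "V \<subseteq> {0..1}" using assms(1) unfolding goedel_set_def by auto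
  ultimately show ?thesis using valid_Gn_if_valid[OF assms(1,2)] valid_if_valid_Gn by blast
qed

lemma BS_sat_sat1_iff:
  assumes "goedel_set V" "BS_sat A"
  shows "sat1 TYPE('u) V A \<longleftrightarrow> (\<forall>n\<ge>2. sat1 TYPE('u) (Gn n) A)"
proof -
  obtain xs ys B where "qfree B" and A: "A = exs xs (alls ys B)" using assms(2) unfolding BS_sat_def by blast
  have "V \<subseteq> {0..1}" "Gn 2 \<subseteq> V" using assms(1) unfolding goedel_set_def Gn_2 by auto
  show ?thesis
  proof (intro iffI allI impI)
    fix n :: nat assume "sat1 TYPE('u) V A" "2 \<le> n"
    then have "sat1 TYPE('u) {0, 1} A" using sat1_crisp_if_sat1 \<open>qfree B\<close> \<open>V \<subseteq> {0..1}\<close> A by blast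
    then show "sat1 TYPE('u) (Gn n) A" using sat1_mono zero_one_in_Gn[OF \<open>2 \<le> n\<close>] by blast
  qed (use sat1_mono[OF \<open>Gn 2 \<subseteq> V\<close>] in auto)
qed

theorem corollary5p4:
  fixes V :: "real set"
  assumes "goedel_set V" and "infinite V"
  shows "(\<forall>A. BS_val A \<longrightarrow>
            (valid TYPE('u) V A \<longleftrightarrow> (\<forall>n\<ge>2. valid TYPE('u) (Gn n) A)))
       \<and> (\<forall>A. BS_sat A \<longrightarrow>
            (sat1 TYPE('u) V A \<longleftrightarrow> (\<forall>n\<ge>2. sat1 TYPE('u) (Gn n) A)))
       \<and> {A. BS_val A \<and> valid TYPE('u) {0..1} A}
           = (\<Inter>n\<in>{2..}. {A. BS_val A \<and> valid TYPE('u) (Gn n) A})"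
proof (intro conjI)
  show "\<forall>A. BS_val A \<longrightarrow> (valid TYPE('u) V A \<longleftrightarrow> (\<forall>n\<ge>2. valid TYPE('u) (Gn n) A))"
    using BS_val_valid_iff[OF assms] by blast
  show "\<forall>A. BS_sat A \<longrightarrow> (sat1 TYPE('u) V A \<longleftrightarrow> (\<forall>n\<ge>2. sat1 TYPE('u) (Gn n) A))"
    using BS_sat_sat1_iff[OF assms(1)] by blast
  have unit_interval: "goedel_set {0..1::real}" "infinite {0..1::real}"
    unfolding goedel_set_def by (auto simp: infinite_Icc)
  show "{A. BS_val A \<and> valid TYPE('u) {0..1} A}
      = (\<Inter>n\<in>{2..}. {A. BS_val A \<and> valid TYPE('u) (Gn n) A})"
    using BS_val_valid_iff[OF unit_interval] by auto
qed

end
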